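(* Suppose $\kappa<\lambda$ are infinite regular cardinals and $\square^{\mathrm{ind}}(\lambda,\kappa)$ holds. Then there is a function $d:[\lambda]^2\to\kappa$ such that: (1) for all $\alpha<\beta<\gamma<\lambda$, $d(\alpha,\gamma)\le\max(d(\alpha,\beta),d(\beta,\gamma))$; (2) for all $\alpha<\beta<\gamma<\lambda$, $d(\alpha,\beta)\le\max(d(\alpha,\gamma),d(\beta,\gamma))$; (3) for every unbounded $I\subseteq\lambda$, $d``[I]^2$ is unbounded in $\kappa$.
   Context: $d(\alpha,\beta)$ denotes $d(\{\alpha,\beta\})$. For a set $C$ of ordinals, $C'$ is its set of limit points $\{\alpha\in C\mid\sup(C\cap\alpha)=\alpha\}$ (for a club $C$ in $\beta$, $\alpha<\beta$ is in $C'$ iff $\sup(C\cap\alpha)=\alpha$). For infinite regular $\kappa<\lambda$, a $\square^{\mathrm{ind}}(\lambda,\kappa)$-sequence is a matrix $\langle C_{\alpha,i}\mid\alpha<\lambda,\ i(\alpha)\le i<\kappa\rangle$ such that: (1) for all limit $\alpha<\lambda$, $i(\alpha)<\kappa$; (2) for all limit $\alpha$ and $i(\alpha)\le i<\kappa$, $C_{\alpha,i}$ is club in $\alpha$; (3) for all limit $\alpha$ and $i(\alpha)\le i<j<\kappa$, $C_{\alpha,i}\subseteq C_{\alpha,j}$; (4) for all limit $\alpha<\beta<\lambda$ and $i(\beta)\le i<\kappa$, if $\alpha\in C'_{\beta,i}$ then $i(\alpha)\le i$ and $C_{\beta,i}\cap\alpha=C_{\alpha,i}$; (5) for all limit $\alpha<\beta<\lambda$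 there is $i<\kappa$ with $\alpha\in C'_{\beta,i}$; (6) there is no club $D\subseteq\lambda$ such that for every $\alpha\in D'$ there is $i<\kappa$ with $D\cap\alpha=C_{\alpha,i}$. $\square^{\mathrm{ind}}(\lambda,\kappa)$ asserts the existence of such a sequence. *)

theory Defs
  imports Main
begin

text \<open>Ordinals below a cardinal are modelled as elements of the field of a
cardinal order (initial-ordinal well-order) r; the ordinal order is r itself.\<close>

definition olt :: "'a rel \<Rightarrow> 'a \<Rightarrow> 'a \<Rightarrow> bool" where
  "olt r x y \<equiv> (x, y) \<in> r \<and> x \<noteq> y"

definition is_limit :: "'a rel \<Rightarrow> 'a \<Rightarrow> bool" where
  "is_limit r \<alpha> \<equiv> \<alpha> \<in> Field r \<and> (\<exists>\<beta>. olt r \<beta> \<alpha>) \<and>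
     (\<forall>\<beta>. olt r \<beta> \<alpha> \<longrightarrow> (\<exists>\<gamma>. olt r \<beta> \<gamma> \<and> olt r \<gamma> \<alpha>))"

definition acc_pt :: "'a rel \<Rightarrow> 'a set \<Rightarrow> 'a \<Rightarrow> bool" where
  "acc_pt r C \<alpha> \<equiv> (\<exists>\<beta>. olt r \<beta> \<alpha>) \<and>
     (\<forall>\<beta>. olt r \<beta> \<alpha> \<longrightarrow> (\<exists>\<gamma>\<in>C. olt r \<beta> \<gamma> \<and> olt r \<gamma> \<alpha>))"

definition lim_pts :: "'a rel \<Rightarrow> 'a set \<Rightarrow> 'a set" where
  "lim_pts r C = {\<alpha> \<in> C. acc_pt r C \<alpha>}"

definition club_in :: "'a rel \<Rightarrow> 'a set \<Rightarrow> 'a \<Rightarrow> bool" where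
  "club_in r C \<alpha> \<equiv> C \<subseteq> {\<xi>. olt r \<xi> \<alpha>} \<and>
     (\<forall>\<beta>. olt r \<beta> \<alpha> \<longrightarrow> (\<exists>\<gamma>\<in>C. (\<beta>, \<gamma>) \<in> r)) \<and>
     (\<forall>\<beta>. olt r \<beta> \<alpha> \<longrightarrow> acc_pt r C \<beta> \<longrightarrow> \<beta> \<in> C)"

definition club_top :: "'a rel \<Rightarrow> 'a set \<Rightarrow> bool" where
  "club_top r D \<equiv> D \<subseteq> Field r \<and>
     (\<forall>\<beta>\<in>Field r. \<exists>\<gamma>\<in>D. (\<beta>, \<gamma>) \<in> r) \<and>
     (\<forall>\<beta>\<in>Field r. acc_pt r D \<beta> \<longrightarrow> \<beta> \<in> D)"

text \<open>square^ind(\<lambda>,\<kappa>)-sequence: \<lambda> = Field r, \<kappa> = Field k,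
  C \<alpha> j = C_{\<alpha>,j}, ii \<alpha> = i(\<alpha>).\<close>
definition square_ind_seq ::
  "'a rel \<Rightarrow> 'b rel \<Rightarrow> ('a \<Rightarrow> 'b \<Rightarrow> 'a set) \<Rightarrow> ('a \<Rightarrow> 'b) \<Rightarrow> bool" where
  "square_ind_seq r k C ii \<equiv>
     (\<forall>\<alpha>. is_limit r \<alpha> \<longrightarrow> ii \<alpha> \<in> Field k) \<and>
     (\<forall>\<alpha> j. is_limit r \<alpha> \<longrightarrow> (ii \<alpha>, j) \<in> k \<longrightarrow> club_in r (C \<alpha> j) \<alpha>) \<and>
     (\<forall>\<alpha> j j'. is_limit r \<alpha> \<longrightarrow> (ii \<alpha>, j) \<in> k \<longrightarrow> olt k j j' \<longrightarrow> C \<alpha> j \<subseteq> C \<alpha> j') \<and>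
     (\<forall>\<alpha> \<beta> j. is_limit r \<alpha> \<longrightarrow> is_limit r \<beta> \<longrightarrow> olt r \<alpha> \<beta> \<longrightarrow> (ii \<beta>, j) \<in> k \<longrightarrow>
        \<alpha> \<in> lim_pts r (C \<beta> j) \<longrightarrow>
        (ii \<alpha>, j) \<in> k \<and> C \<beta> j \<inter> {\<xi>. olt r \<xi> \<alpha>} = C \<alpha> j) \<and>
     (\<forall>\<alpha> \<beta>. is_limit r \<alpha> \<longrightarrow> is_limit r \<beta> \<longrightarrow> olt r \<alpha> \<beta> \<longrightarrow>
        (\<exists>j. (ii \<beta>, j) \<in> k \<and> \<alpha> \<in> lim_pts r (C \<beta> j))) \<and>
     \<not> (\<exists>D. club_top r D \<and>
          (\<forall>\<alpha>\<in>lim_pts r D. \<exists>j. (ii \<alpha>, j) \<in> k \<and> D \<inter> {\<xi>. olt r \<xi> \<alpha>} = C \<alpha> j))"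

definition square_ind :: "'a rel \<Rightarrow> 'b rel \<Rightarrow> bool" where
  "square_ind r k \<equiv> \<exists>C ii. square_ind_seq r k C ii"

end

theory Submission
  imports Defs
begin

text \<open>Send every ordinal \<open>\<alpha>\<close> to the least limit ordinal \<open>L \<alpha>\<close> above it; one exists
  because \<open>\<lambda> > \<kappa> \<ge> \<omega>\<close> is regular, hence of uncountable cofinality. For limits \<open>a < b\<close> let
  \<open>e(a, b)\<close> be the least \<open>j\<close> with \<open>a \<in> C'(b, j)\<close>. By coherence, \<open>a \<in> C'(b, j)\<close> and
  \<open>b \<in> C'(c, j)\<close> give \<open>a \<in> C'(c, j)\<close>, while \<open>a, b \<in> C'(c, j)\<close> give \<open>a \<in> C'(b, j)\<close>; these
  are exactly the two triangle inequalities for \<open>e\<close>, and \<open>d(\<alpha>, \<beta>) = e(L \<alpha>, L \<beta>)\<close> (or \<open>0\<close>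
  when \<open>L \<alpha> = L \<beta>\<close>) inherits them. If \<open>d\<close> were bounded by \<open>j\<close> on an unbounded \<open>I\<close>, the
  clubs \<open>C(b, j)\<close> for \<open>b \<in> L[I]\<close> would cohere, and their union would be a club threading
  the sequence, which clause (6) forbids.\<close>

unbundle cardinal_syntax

lemma olt_FieldD: "olt r x y \<Longrightarrow> x \<in> Field r \<and> y \<in> Field r"
  unfolding olt_def by (auto intro: FieldI1 FieldI2)

lemma is_limit_if_acc_pt: "\<alpha> \<in> Field r \<Longrightarrow> acc_pt r X \<alpha> \<Longrightarrow> is_limit r \<alpha>"
  unfolding is_limit_def acc_pt_def by blast

lemma lim_pts_mono: "X \<subseteq> Y \<Longrightarrow> lim_pts r X \<subseteq> lim_pts r Y"
  unfolding lim_pts_def acc_pt_def by blast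

context wo_rel
begin

lemma Field_refl: "x \<in> Field r \<Longrightarrow> (x, x) \<in> r"
  using REFL unfolding refl_on_def by blast

lemma rel_trans: "(x, y) \<in> r \<Longrightarrow> (y, z) \<in> r \<Longrightarrow> (x, z) \<in> r"
  using TRANS unfolding trans_def by blast

lemma olt_not_le: "olt r x y \<Longrightarrow> (y, x) \<notin> r"
  using ANTISYM unfolding olt_def antisym_def by blast

lemma olt_trans: "olt r x y \<Longrightarrow> olt r y z \<Longrightarrow> olt r x z"
  using rel_trans olt_not_le unfolding olt_def by blast

lemma olt_le_trans: "olt r x y \<Longrightarrow> (y, z) \<in> r \<Longrightarrow> olt r x z"
  using rel_trans olt_not_le unfolding olt_def by blast

lemma le_olt_trans: "(x, y) \<in> r \<Longrightarrow> olt r y z \<Longrightarrow> olt r x z"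
  using rel_trans olt_not_le unfolding olt_def by blast

lemma le_of_not_olt: "x \<in> Field r \<Longrightarrow> y \<in> Field r \<Longrightarrow> \<not> olt r x y \<Longrightarrow> (y, x) \<in> r"
  using TOTALS Field_refl unfolding olt_def by blast

lemma olt_linear: "x \<in> Field r \<Longrightarrow> y \<in> Field r \<Longrightarrow> olt r x y \<or> x = y \<or> olt r y x"
  using TOTALS unfolding olt_def by blast

lemma le_or_le_of_common_bounds:
  assumes "x \<in> Field r" "y \<in> Field r" "\<And>i. (x, i) \<in> r \<Longrightarrow> (y, i) \<in> r \<Longrightarrow> (z, i) \<in> r"
  shows "(z, x) \<in> r \<or> (z, y) \<in> r"
  using assms TOTALS Field_refl by metis

lemma acc_pt_restrict:
  assumes "acc_pt r X a" "olt r a b" "X \<inter> {\<xi>. olt r \<xi> b} \<subseteq> Y"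
  shows "acc_pt r Y a"
  using assms olt_trans unfolding acc_pt_def by blast

lemma lim_pts_Int_below_iff:
  assumes "olt r a b" "X \<inter> {\<xi>. olt r \<xi> b} = Y"
  shows "a \<in> lim_pts r X \<longleftrightarrow> a \<in> lim_pts r Y"
  using assms acc_pt_restrict[of X a b Y] acc_pt_restrict[of Y a b X]
  unfolding lim_pts_def by blast

lemma is_limit_minim_strict_upper_bounds:
  assumes inc: "\<And>n. olt r (f n) (f (Suc n))"
    and ne: "{x \<in> Field r. \<forall>n. olt r (f n) x} \<noteq> {}"
  shows "is_limit r (minim {x \<in> Field r. \<forall>n. olt r (f n) x})"
proof -
  let ?B = "{x \<in> Field r. \<forall>n. olt r (f n) x}"
  have B: "?B \<subseteq> Field r" by blast
  have \<mu>: "minim ?B \<in> ?B" using minim_in[OF B ne] .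
  show ?thesis
    unfolding is_limit_def
  proof (intro conjI allI impI)
    show "minim ?B \<in> Field r" "\<exists>\<beta>. olt r \<beta> (minim ?B)" using \<mu> by auto
    fix \<beta> assume \<beta>: "olt r \<beta> (minim ?B)"
    then have "\<beta> \<notin> ?B" using minim_least[OF B] olt_not_le by blast
    then obtain n where "\<not> olt r (f n) \<beta>" using olt_FieldD[OF \<beta>] by blast
    then have "(\<beta>, f n) \<in> r" using le_of_not_olt olt_FieldD[OF \<beta>] olt_FieldD[OF inc] by blast
    then show "\<exists>\<gamma>. olt r \<beta> \<gamma> \<and> olt r \<gamma> (minim ?B)"
      using le_olt_trans[OF _ inc] \<mu> by blast
  qed
qed

end

lemma regularCard_bounds_nat_sequence:
  fixes f :: "nat \<Rightarrow> 'a"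
  assumes "Card_order r" "regularCard r" "natLeq <o r" "range f \<subseteq> Field r"
  shows "\<exists>b\<in>Field r. \<forall>n. (f n, b) \<in> r"
proof -
  interpret wo_rel r using assms(1) by (rule Card_order_wo_rel)
  have "|range f| \<le>o |UNIV :: nat set|" by (rule card_of_image)
  then have "|range f| <o r"
    using card_of_nat assms(3) ordLeq_ordIso_trans ordLeq_ordLess_trans by blast
  then have "\<not> cofinal (range f) r"
    using assms(2,4) not_ordLess_ordIso unfolding regularCard_def by blast
  then obtain b where "b \<in> Field r" "\<forall>n. b = f n \<or> (b, f n) \<notin> r"
    unfolding cofinal_def by auto
  then show ?thesis using assms(4) le_of_not_olt unfolding olt_def by blast
qed

lemma exists_limit_above:
  assumes "Cinfinite r" "regularCard r" "natLeq <o r" "\<alpha> \<in> Field r"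
  shows "\<exists>\<mu>. is_limit r \<mu> \<and> olt r \<alpha> \<mu>"
proof -
  interpret wo_rel r using assms(1) by (simp add: Card_order_wo_rel)
  have "\<forall>\<gamma>\<in>Field r. \<exists>\<delta>. \<delta> \<in> Field r \<and> olt r \<gamma> \<delta>"
    using Cinfinite_limit[OF _ assms(1)] unfolding olt_def by blast
  then obtain s where s: "\<And>\<gamma>. \<gamma> \<in> Field r \<Longrightarrow> s \<gamma> \<in> Field r \<and> olt r \<gamma> (s \<gamma>)"
    by metis
  define f where "f n = (s ^^ n) \<alpha>" for n
  have f_Field: "f n \<in> Field r" for n
    by (induction n) (simp_all add: f_def assms(4) s)
  have f_inc: "olt r (f n) (f (Suc n))" for n
    using s[OF f_Field[of n]] by (simp add: f_def)
  obtain b where "b \<in> Field r" "\<forall>n. (f n, b) \<in> r"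
    using regularCard_bounds_nat_sequence[OF _ assms(2,3), of f] assms(1) f_Field by auto
  then have "b \<in> {x \<in> Field r. \<forall>n. olt r (f n) x}"
    using olt_le_trans[OF f_inc] by blast
  then have "is_limit r (minim {x \<in> Field r. \<forall>n. olt r (f n) x})"
    and "olt r (f 0) (minim {x \<in> Field r. \<forall>n. olt r (f n) x})"
    using is_limit_minim_strict_upper_bounds[of f, OF f_inc] minim_in[of "{x \<in> Field r. \<forall>n. olt r (f n) x}"]
    by blast+
  then show ?thesis by (auto simp: f_def)
qed

locale square_ind_sequence =
  fixes r :: "'a rel" and k :: "'b rel" and C :: "'a \<Rightarrow> 'b \<Rightarrow> 'a set" and ii :: "'a \<Rightarrow> 'b"
  assumes Cinfinite_r: "Cinfinite r" and regular_r: "regularCard r"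
    and Cinfinite_k: "Cinfinite k" and k_less_r: "k <o r"
    and seq: "square_ind_seq r k C ii"
begin

sublocale r: wo_rel r
  using Cinfinite_r by (simp add: Card_order_wo_rel)

sublocale k: wo_rel k
  using Cinfinite_k by (simp add: Card_order_wo_rel)

lemma club_in_C: "is_limit r \<alpha> \<Longrightarrow> (ii \<alpha>, j) \<in> k \<Longrightarrow> club_in r (C \<alpha> j) \<alpha>"
  using seq unfolding square_ind_seq_def by simp

lemma C_mono: "is_limit r \<alpha> \<Longrightarrow> (ii \<alpha>, j) \<in> k \<Longrightarrow> (j, j') \<in> k \<Longrightarrow> C \<alpha> j \<subseteq> C \<alpha> j'"
  using seq unfolding square_ind_seq_def olt_def by (cases "j = j'") auto

lemma C_coherent:
  "is_limit r \<alpha> \<Longrightarrow> is_limit r \<beta> \<Longrightarrow> olt r \<alpha> \<beta> \<Longrightarrow> (ii \<beta>, j) \<in> k \<Longrightarrow> \<alpha> \<in> lim_pts r (C \<beta> j) \<Longrightarrow>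
    (ii \<alpha>, j) \<in> k \<and> C \<beta> j \<inter> {\<xi>. olt r \<xi> \<alpha>} = C \<alpha> j"
  using seq unfolding square_ind_seq_def by blast

lemma exists_index_lim_pts:
  "is_limit r \<alpha> \<Longrightarrow> is_limit r \<beta> \<Longrightarrow> olt r \<alpha> \<beta> \<Longrightarrow> \<exists>j. (ii \<beta>, j) \<in> k \<and> \<alpha> \<in> lim_pts r (C \<beta> j)"
  using seq unfolding square_ind_seq_def by blast

lemma no_threading_club:
  "\<not> (\<exists>D. club_top r D \<and> (\<forall>\<alpha>\<in>lim_pts r D. \<exists>j. (ii \<alpha>, j) \<in> k \<and> D \<inter> {\<xi>. olt r \<xi> \<alpha>} = C \<alpha> j))"
  using seq unfolding square_ind_seq_def by blast

lemma C_coherent_lim_pts: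
  assumes "is_limit r \<beta>" "is_limit r \<gamma>" "olt r \<beta> \<gamma>" "(ii \<gamma>, j) \<in> k"
    "\<beta> \<in> lim_pts r (C \<gamma> j)" "olt r \<alpha> \<beta>"
  shows "(ii \<beta>, j) \<in> k" and "\<alpha> \<in> lim_pts r (C \<gamma> j) \<longleftrightarrow> \<alpha> \<in> lim_pts r (C \<beta> j)"
  using C_coherent[OF assms(1-5)] r.lim_pts_Int_below_iff[OF assms(6)] by blast+

definition next_limit :: "'a \<Rightarrow> 'a" where
  "next_limit \<alpha> = r.minim {\<mu>. is_limit r \<mu> \<and> olt r \<alpha> \<mu>}"

lemma next_limit:
  assumes "\<alpha> \<in> Field r"
  shows "is_limit r (next_limit \<alpha>)" and "olt r \<alpha> (next_limit \<alpha>)"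
proof -
  have "natLeq <o r"
    using natLeq_ordLeq_cinfinite[OF Cinfinite_k] k_less_r ordLeq_ordLess_trans by blast
  then have "{\<mu>. is_limit r \<mu> \<and> olt r \<alpha> \<mu>} \<noteq> {}"
    using exists_limit_above[OF Cinfinite_r regular_r _ assms] by blast
  moreover have "{\<mu>. is_limit r \<mu> \<and> olt r \<alpha> \<mu>} \<subseteq> Field r"
    unfolding is_limit_def by blast
  ultimately show "is_limit r (next_limit \<alpha>)" and "olt r \<alpha> (next_limit \<alpha>)"
    using r.minim_in unfolding next_limit_def by blast+
qed

lemma next_limit_mono:
  assumes "(\<alpha>, \<beta>) \<in> r"
  shows "(next_limit \<alpha>, next_limit \<beta>) \<in> r"
proof -
  have "\<beta> \<in> Field r" using assms by (rule FieldI2)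
  then have "next_limit \<beta> \<in> {\<mu>. is_limit r \<mu> \<and> olt r \<alpha> \<mu>}"
    using next_limit r.le_olt_trans[OF assms] by blast
  moreover have "{\<mu>. is_limit r \<mu> \<and> olt r \<alpha> \<mu>} \<subseteq> Field r"
    unfolding is_limit_def by blast
  ultimately show ?thesis using r.minim_least unfolding next_limit_def by blast
qed

lemma next_limit_strict_mono:
  "olt r \<alpha> \<beta> \<Longrightarrow> next_limit \<alpha> \<noteq> next_limit \<beta> \<Longrightarrow> olt r (next_limit \<alpha>) (next_limit \<beta>)"
  using next_limit_mono unfolding olt_def by blast

definition entry_index :: "'a \<Rightarrow> 'a \<Rightarrow> 'b" where
  "entry_index \<alpha> \<beta> = k.minim {j. (ii \<beta>, j) \<in> k \<and> \<alpha> \<in> lim_pts r (C \<beta> j)}"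

lemma entry_index:
  assumes "is_limit r \<alpha>" "is_limit r \<beta>" "olt r \<alpha> \<beta>"
  shows "entry_index \<alpha> \<beta> \<in> Field k"
    and "(entry_index \<alpha> \<beta>, j) \<in> k \<longleftrightarrow> (ii \<beta>, j) \<in> k \<and> \<alpha> \<in> lim_pts r (C \<beta> j)"
proof -
  let ?J = "{j. (ii \<beta>, j) \<in> k \<and> \<alpha> \<in> lim_pts r (C \<beta> j)}"
  have J: "?J \<subseteq> Field k" "?J \<noteq> {}"
    using exists_index_lim_pts[OF assms] by (auto intro: FieldI2)
  have e: "entry_index \<alpha> \<beta> \<in> ?J"
    unfolding entry_index_def using k.minim_in[OF J] .
  then show "entry_index \<alpha> \<beta> \<in> Field k" using J(1) by blast
  show "(entry_index \<alpha> \<beta>, j) \<in> k \<longleftrightarrow> (ii \<beta>, j) \<in> k \<and> \<alpha> \<in> lim_pts r (C \<beta> j)"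
  proof
    assume j: "(entry_index \<alpha> \<beta>, j) \<in> k"
    then have "(ii \<beta>, j) \<in> k" using e k.rel_trans by blast
    moreover have "\<alpha> \<in> lim_pts r (C \<beta> j)"
      using e lim_pts_mono[OF C_mono[OF assms(2) _ j]] by blast
    ultimately show "(ii \<beta>, j) \<in> k \<and> \<alpha> \<in> lim_pts r (C \<beta> j)" ..
  next
    assume "(ii \<beta>, j) \<in> k \<and> \<alpha> \<in> lim_pts r (C \<beta> j)"
    then show "(entry_index \<alpha> \<beta>, j) \<in> k"
      using k.minim_least[OF J(1)] unfolding entry_index_def by blast
  qed
qed

lemma entry_index_le_outer:
  assumes \<alpha>: "is_limit r \<alpha>" and \<beta>: "is_limit r \<beta>" and \<gamma>: "is_limit r \<gamma>"
    and \<alpha>\<beta>: "olt r \<alpha> \<beta>" and \<beta>\<gamma>: "olt r \<beta> \<gamma>"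
    and "(entry_index \<alpha> \<beta>, j) \<in> k" "(entry_index \<beta> \<gamma>, j) \<in> k"
  shows "(entry_index \<alpha> \<gamma>, j) \<in> k"
proof -
  have "\<alpha> \<in> lim_pts r (C \<beta> j)" using assms(6) entry_index(2)[OF \<alpha> \<beta> \<alpha>\<beta>] by blast
  moreover have "(ii \<gamma>, j) \<in> k" "\<beta> \<in> lim_pts r (C \<gamma> j)"
    using assms(7) entry_index(2)[OF \<beta> \<gamma> \<beta>\<gamma>] by blast+
  ultimately have "(ii \<gamma>, j) \<in> k \<and> \<alpha> \<in> lim_pts r (C \<gamma> j)"
    using C_coherent_lim_pts(2)[OF \<beta> \<gamma> \<beta>\<gamma> _ _ \<alpha>\<beta>] by blast
  then show ?thesis using entry_index(2)[OF \<alpha> \<gamma> r.olt_trans[OF \<alpha>\<beta> \<beta>\<gamma>]] by blast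
qed

lemma entry_index_le_lower:
  assumes \<alpha>: "is_limit r \<alpha>" and \<beta>: "is_limit r \<beta>" and \<gamma>: "is_limit r \<gamma>"
    and \<alpha>\<beta>: "olt r \<alpha> \<beta>" and \<beta>\<gamma>: "olt r \<beta> \<gamma>"
    and "(entry_index \<alpha> \<gamma>, j) \<in> k" "(entry_index \<beta> \<gamma>, j) \<in> k"
  shows "(entry_index \<alpha> \<beta>, j) \<in> k"
proof -
  have "\<alpha> \<in> lim_pts r (C \<gamma> j)"
    using assms(6) entry_index(2)[OF \<alpha> \<gamma> r.olt_trans[OF \<alpha>\<beta> \<beta>\<gamma>]] by blast
  moreover have "(ii \<gamma>, j) \<in> k" "\<beta> \<in> lim_pts r (C \<gamma> j)"
    using assms(7) entry_index(2)[OF \<beta> \<gamma> \<beta>\<gamma>] by blast+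
  ultimately have "(ii \<beta>, j) \<in> k \<and> \<alpha> \<in> lim_pts r (C \<beta> j)"
    using C_coherent_lim_pts[OF \<beta> \<gamma> \<beta>\<gamma> _ _ \<alpha>\<beta>] by blast
  then show ?thesis using entry_index(2)[OF \<alpha> \<beta> \<alpha>\<beta>] by blast
qed

definition ord_dist :: "'a \<Rightarrow> 'a \<Rightarrow> 'b" where
  "ord_dist \<alpha> \<beta> =
    (if next_limit \<alpha> = next_limit \<beta> then k.minim (Field k)
     else entry_index (next_limit \<alpha>) (next_limit \<beta>))"

lemma ord_dist_entry_index:
  assumes "olt r \<alpha> \<beta>" "next_limit \<alpha> \<noteq> next_limit \<beta>"
  shows "ord_dist \<alpha> \<beta> = entry_index (next_limit \<alpha>) (next_limit \<beta>)"
    and "is_limit r (next_limit \<alpha>)" "is_limit r (next_limit \<beta>)"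
    and "olt r (next_limit \<alpha>) (next_limit \<beta>)"
  using assms next_limit[of \<alpha>] next_limit[of \<beta>] next_limit_strict_mono olt_FieldD[OF assms(1)]
  unfolding ord_dist_def by auto

lemma ord_dist_in_Field:
  assumes "olt r \<alpha> \<beta>"
  shows "ord_dist \<alpha> \<beta> \<in> Field k"
proof (cases "next_limit \<alpha> = next_limit \<beta>")
  case True
  have "Field k \<noteq> {}" using Cinfinite_k unfolding cinfinite_def by auto
  then show ?thesis using True k.minim_in unfolding ord_dist_def by auto
next
  case False
  then show ?thesis using ord_dist_entry_index[OF assms] entry_index(1) by metis
qed

lemma ord_dist_ultra_outer:
  assumes \<alpha>\<beta>: "olt r \<alpha> \<beta>" and \<beta>\<gamma>: "olt r \<beta> \<gamma>"
  shows "(ord_dist \<alpha> \<gamma>, ord_dist \<alpha> \<beta>) \<in> k \<or> (ord_dist \<alpha> \<gamma>, ord_dist \<beta> \<gamma>) \<in> k"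
proof -
  consider "next_limit \<alpha> = next_limit \<beta>" | "next_limit \<beta> = next_limit \<gamma>"
    | "next_limit \<alpha> \<noteq> next_limit \<beta>" "next_limit \<beta> \<noteq> next_limit \<gamma>" by blast
  then show ?thesis
  proof cases
    case 1
    then have "ord_dist \<alpha> \<gamma> = ord_dist \<beta> \<gamma>" unfolding ord_dist_def by simp
    then show ?thesis using k.Field_refl[OF ord_dist_in_Field[OF \<beta>\<gamma>]] by simp
  next
    case 2
    then have "ord_dist \<alpha> \<gamma> = ord_dist \<alpha> \<beta>" unfolding ord_dist_def by simp
    then show ?thesis using k.Field_refl[OF ord_dist_in_Field[OF \<alpha>\<beta>]] by simp
  next
    case 3
    note A = ord_dist_entry_index[OF \<alpha>\<beta> 3(1)] and B = ord_dist_entry_index[OF \<beta>\<gamma> 3(2)]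
    have AC: "olt r (next_limit \<alpha>) (next_limit \<gamma>)" using r.olt_trans[OF A(4) B(4)] .
    then have "ord_dist \<alpha> \<gamma> = entry_index (next_limit \<alpha>) (next_limit \<gamma>)"
      unfolding ord_dist_def olt_def by auto
    then show ?thesis
      using k.le_or_le_of_common_bounds[OF entry_index(1)[OF A(2,3,4)] entry_index(1)[OF B(2,3,4)]]
        entry_index_le_outer[OF A(2,3) B(3) A(4) B(4)] A(1) B(1) by metis
  qed
qed

lemma ord_dist_ultra_lower:
  assumes \<alpha>\<beta>: "olt r \<alpha> \<beta>" and \<beta>\<gamma>: "olt r \<beta> \<gamma>"
  shows "(ord_dist \<alpha> \<beta>, ord_dist \<alpha> \<gamma>) \<in> k \<or> (ord_dist \<alpha> \<beta>, ord_dist \<beta> \<gamma>) \<in> k"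
proof -
  have \<alpha>\<gamma>: "olt r \<alpha> \<gamma>" using r.olt_trans[OF \<alpha>\<beta> \<beta>\<gamma>] .
  consider "next_limit \<alpha> = next_limit \<beta>" | "next_limit \<beta> = next_limit \<gamma>"
    | "next_limit \<alpha> \<noteq> next_limit \<beta>" "next_limit \<beta> \<noteq> next_limit \<gamma>" by blast
  then show ?thesis
  proof cases
    case 1
    then have "ord_dist \<alpha> \<beta> = k.minim (Field k)" unfolding ord_dist_def by simp
    then show ?thesis using k.minim_least[OF _ ord_dist_in_Field[OF \<alpha>\<gamma>]] by simp
  next
    case 2
    then have "ord_dist \<alpha> \<gamma> = ord_dist \<alpha> \<beta>" unfolding ord_dist_def by simp
    then show ?thesis using k.Field_refl[OF ord_dist_in_Field[OF \<alpha>\<beta>]] by simp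
  next
    case 3
    note A = ord_dist_entry_index[OF \<alpha>\<beta> 3(1)] and B = ord_dist_entry_index[OF \<beta>\<gamma> 3(2)]
    have AC: "olt r (next_limit \<alpha>) (next_limit \<gamma>)" using r.olt_trans[OF A(4) B(4)] .
    then have "ord_dist \<alpha> \<gamma> = entry_index (next_limit \<alpha>) (next_limit \<gamma>)"
      unfolding ord_dist_def olt_def by auto
    then show ?thesis
      using k.le_or_le_of_common_bounds[OF entry_index(1)[OF A(2) B(3) AC] entry_index(1)[OF B(2,3,4)]]
        entry_index_le_lower[OF A(2,3) B(3) A(4) B(4)] A(1) B(1) by metis
  qed
qed

context
  fixes B :: "'a set" and j :: 'b
  assumes B_limits: "\<And>b. b \<in> B \<Longrightarrow> is_limit r b"
    and B_cofinal: "\<And>\<beta>. \<beta> \<in> Field r \<Longrightarrow> \<exists>b\<in>B. olt r \<beta> b"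
    and B_coherent: "\<And>a b. a \<in> B \<Longrightarrow> b \<in> B \<Longrightarrow> olt r a b \<Longrightarrow> (ii b, j) \<in> k \<and> a \<in> lim_pts r (C b j)"
begin

lemma B_Field: "b \<in> B \<Longrightarrow> b \<in> Field r"
  using B_limits unfolding is_limit_def by blast

lemma B_C_Int_below:
  assumes "a \<in> B" "b \<in> B" "olt r a b"
  shows "(ii a, j) \<in> k \<and> C b j \<inter> {\<xi>. olt r \<xi> a} = C a j"
  using B_coherent[OF assms] C_coherent[OF B_limits[OF assms(1)] B_limits[OF assms(2)] assms(3)] by blast

lemma B_index_le: "b \<in> B \<Longrightarrow> (ii b, j) \<in> k"
  using B_cofinal[OF B_Field] B_C_Int_below by blast

lemma B_C_below: "b \<in> B \<Longrightarrow> C b j \<subseteq> {\<xi>. olt r \<xi> b}"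
  using club_in_C[OF B_limits B_index_le] unfolding club_in_def by blast

lemma union_Int_below: "b \<in> B \<Longrightarrow> (\<Union>b\<in>B. C b j) \<inter> {\<xi>. olt r \<xi> b} = C b j"
proof
  assume b: "b \<in> B"
  show "C b j \<subseteq> (\<Union>b\<in>B. C b j) \<inter> {\<xi>. olt r \<xi> b}" using B_C_below[OF b] b by blast
  show "(\<Union>b\<in>B. C b j) \<inter> {\<xi>. olt r \<xi> b} \<subseteq> C b j"
  proof
    fix \<xi> assume "\<xi> \<in> (\<Union>b\<in>B. C b j) \<inter> {\<xi>. olt r \<xi> b}"
    then obtain b' where b': "b' \<in> B" "\<xi> \<in> C b' j" and \<xi>: "olt r \<xi> b" by blast
    consider "b = b'" | "olt r b' b" | "olt r b b'"
      using r.olt_linear[OF B_Field[OF b] B_Field[OF b'(1)]] by blast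
    then show "\<xi> \<in> C b j"
    proof cases
      case 1
      then show ?thesis using b'(2) by simp
    next
      case 2
      then show ?thesis using B_C_Int_below[OF b'(1) b] b'(2) by blast
    next
      case 3
      then show ?thesis using B_C_Int_below[OF b b'(1)] b'(2) \<xi> by blast
    qed
  qed
qed

lemma club_top_union: "club_top r (\<Union>b\<in>B. C b j)"
  unfolding club_top_def
proof (intro conjI ballI impI)
  show "(\<Union>b\<in>B. C b j) \<subseteq> Field r"
  proof
    fix \<xi> assume "\<xi> \<in> (\<Union>b\<in>B. C b j)"
    then obtain b where "b \<in> B" "\<xi> \<in> C b j" by blast
    then show "\<xi> \<in> Field r" using B_C_below olt_FieldD[of r \<xi> b] by blast
  qed
next
  fix \<beta> assume "\<beta> \<in> Field r"
  then obtain b where b: "b \<in> B" "olt r \<beta> b" using B_cofinal by blast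
  obtain b' where b': "b' \<in> B" "olt r b b'" using B_cofinal[OF B_Field[OF b(1)]] by blast
  have "b \<in> C b' j" using B_coherent[OF b(1) b'] unfolding lim_pts_def by blast
  then show "\<exists>\<gamma>\<in>\<Union>b\<in>B. C b j. (\<beta>, \<gamma>) \<in> r" using b b'(1) unfolding olt_def by blast
next
  fix \<beta> assume "\<beta> \<in> Field r" and acc: "acc_pt r (\<Union>b\<in>B. C b j) \<beta>"
  then obtain b where b: "b \<in> B" "olt r \<beta> b" using B_cofinal by blast
  have "acc_pt r (C b j) \<beta>" using r.acc_pt_restrict[OF acc b(2)] union_Int_below[OF b(1)] by blast
  then have "\<beta> \<in> C b j" using club_in_C[OF B_limits[OF b(1)] B_index_le[OF b(1)]] b(2)
    unfolding club_in_def by blast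
  then show "\<beta> \<in> (\<Union>b\<in>B. C b j)" using b(1) by blast
qed

lemma union_threads:
  assumes \<alpha>: "\<alpha> \<in> lim_pts r (\<Union>b\<in>B. C b j)"
  shows "\<exists>j'. (ii \<alpha>, j') \<in> k \<and> (\<Union>b\<in>B. C b j) \<inter> {\<xi>. olt r \<xi> \<alpha>} = C \<alpha> j'"
proof -
  have "\<alpha> \<in> Field r" using \<alpha> club_top_union unfolding lim_pts_def club_top_def by blast
  then obtain b where b: "b \<in> B" "olt r \<alpha> b" using B_cofinal by blast
  have "\<alpha> \<in> lim_pts r (C b j)"
    using r.lim_pts_Int_below_iff[OF b(2) union_Int_below[OF b(1)]] \<alpha> by blast
  moreover have "is_limit r \<alpha>"
    using is_limit_if_acc_pt[OF \<open>\<alpha> \<in> Field r\<close>] \<alpha> unfolding lim_pts_def by blast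
  ultimately have "(ii \<alpha>, j) \<in> k \<and> C b j \<inter> {\<xi>. olt r \<xi> \<alpha>} = C \<alpha> j"
    using C_coherent B_limits[OF b(1)] b(2) B_index_le[OF b(1)] by blast
  moreover have "(\<Union>b\<in>B. C b j) \<inter> {\<xi>. olt r \<xi> \<alpha>} = C b j \<inter> {\<xi>. olt r \<xi> \<alpha>}"
    using union_Int_below[OF b(1)] r.olt_trans[OF _ b(2)] by blast
  ultimately show ?thesis by auto
qed

lemma no_coherent_cofinal_limits: False
  using no_threading_club club_top_union union_threads by blast

end

lemma ord_dist_unbounded:
  assumes I: "I \<subseteq> Field r" and I_cofinal: "\<forall>\<beta>\<in>Field r. \<exists>\<gamma>\<in>I. (\<beta>, \<gamma>) \<in> r"
    and j: "j \<in> Field k"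
  shows "\<exists>\<alpha>\<in>I. \<exists>\<beta>\<in>I. olt r \<alpha> \<beta> \<and> (j, ord_dist \<alpha> \<beta>) \<in> k"
proof (rule ccontr)
  assume "\<not> ?thesis"
  then have bounded: "(ord_dist \<alpha> \<beta>, j) \<in> k" if "\<alpha> \<in> I" "\<beta> \<in> I" "olt r \<alpha> \<beta>" for \<alpha> \<beta>
    using that k.le_of_not_olt[OF ord_dist_in_Field j] unfolding olt_def by blast
  have "(ii b, j) \<in> k \<and> a \<in> lim_pts r (C b j)"
    if a: "a \<in> next_limit ` I" and b: "b \<in> next_limit ` I" and ab: "olt r a b" for a b
  proof -
    obtain \<alpha> \<beta> where \<alpha>\<beta>: "\<alpha> \<in> I" "\<beta> \<in> I" "a = next_limit \<alpha>" "b = next_limit \<beta>"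
      using a b by blast
    have "olt r \<alpha> \<beta>"
    proof (rule ccontr)
      assume "\<not> olt r \<alpha> \<beta>"
      then have "(b, a) \<in> r"
        using r.le_of_not_olt[of \<alpha> \<beta>] next_limit_mono[of \<beta> \<alpha>] \<alpha>\<beta> I by blast
      then show False using r.olt_not_le[OF ab] by blast
    qed
    moreover have "next_limit \<alpha> \<noteq> next_limit \<beta>" using ab \<alpha>\<beta>(3,4) unfolding olt_def by blast
    ultimately have "(entry_index a b, j) \<in> k"
      using bounded[OF \<alpha>\<beta>(1,2)] ord_dist_entry_index(1) \<alpha>\<beta>(3,4) by metis
    then show ?thesis
      using entry_index(2) ord_dist_entry_index(2,3) \<open>olt r \<alpha> \<beta>\<close>
        \<open>next_limit \<alpha> \<noteq> next_limit \<beta>\<close> \<alpha>\<beta>(3,4) ab by blast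
  qed
  moreover have "\<exists>b\<in>next_limit ` I. olt r \<beta> b" if \<beta>: "\<beta> \<in> Field r" for \<beta>
  proof -
    obtain \<gamma> where "\<gamma> \<in> I" "(\<beta>, \<gamma>) \<in> r" using I_cofinal \<beta> by blast
    then have "olt r \<beta> (next_limit \<gamma>)" using next_limit(2) I r.le_olt_trans by blast
    then show ?thesis using \<open>\<gamma> \<in> I\<close> by blast
  qed
  moreover have "is_limit r b" if "b \<in> next_limit ` I" for b
    using that next_limit(1) I by blast
  ultimately show False
    using no_coherent_cofinal_limits[of "next_limit ` I" j] by blast
qed

definition pair_dist :: "'a set \<Rightarrow> 'b" where
  "pair_dist S = (let p = SOME p. S = {fst p, snd p} \<and> olt r (fst p) (snd p) in ord_dist (fst p) (snd p))"

lemma pair_dist_eq: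
  assumes "olt r \<alpha> \<beta>"
  shows "pair_dist {\<alpha>, \<beta>} = ord_dist \<alpha> \<beta>"
proof -
  define p where "p = (SOME p. {\<alpha>, \<beta>} = {fst p, snd p} \<and> olt r (fst p) (snd p))"
  have "{\<alpha>, \<beta>} = {fst p, snd p} \<and> olt r (fst p) (snd p)"
    unfolding p_def by (rule someI[of _ "(\<alpha>, \<beta>)"]) (simp add: assms)
  then have "p = (\<alpha>, \<beta>)"
    using assms r.olt_not_le unfolding olt_def by (auto simp: doubleton_eq_iff prod_eq_iff)
  then show ?thesis unfolding pair_dist_def p_def[symmetric] by simp
qed

lemma pair_dist_in_Field:
  assumes "\<alpha> \<in> Field r" "\<beta> \<in> Field r" "\<alpha> \<noteq> \<beta>"
  shows "pair_dist {\<alpha>, \<beta>} \<in> Field k"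
  using r.olt_linear[OF assms(1,2)] assms(3) pair_dist_eq ord_dist_in_Field
  by (metis insert_commute)

end

theorem mainTheorem9:
  fixes r :: "'a rel" and k :: "'b rel"
  assumes "Cinfinite r" and "regularCard r"
    and "Cinfinite k" and "regularCard k"
    and "(k, r) \<in> ordLess"
    and "square_ind r k"
  shows "\<exists>d :: 'a set \<Rightarrow> 'b.
     (\<forall>\<alpha>\<in>Field r. \<forall>\<beta>\<in>Field r. \<alpha> \<noteq> \<beta> \<longrightarrow> d {\<alpha>, \<beta>} \<in> Field k) \<and>
     (\<forall>\<alpha> \<beta> \<gamma>. olt r \<alpha> \<beta> \<longrightarrow> olt r \<beta> \<gamma> \<longrightarrow> \<gamma> \<in> Field r \<longrightarrow>
        (d {\<alpha>, \<gamma>}, d {\<alpha>, \<beta>}) \<in> k \<or> (d {\<alpha>, \<gamma>}, d {\<beta>, \<gamma>}) \<in> k) \<and>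
     (\<forall>\<alpha> \<beta> \<gamma>. olt r \<alpha> \<beta> \<longrightarrow> olt r \<beta> \<gamma> \<longrightarrow> \<gamma> \<in> Field r \<longrightarrow>
        (d {\<alpha>, \<beta>}, d {\<alpha>, \<gamma>}) \<in> k \<or> (d {\<alpha>, \<beta>}, d {\<beta>, \<gamma>}) \<in> k) \<and>
     (\<forall>I. I \<subseteq> Field r \<longrightarrow> (\<forall>\<beta>\<in>Field r. \<exists>\<gamma>\<in>I. (\<beta>, \<gamma>) \<in> r) \<longrightarrow>
        (\<forall>j\<in>Field k. \<exists>\<alpha>\<in>I. \<exists>\<beta>\<in>I. \<alpha> \<noteq> \<beta> \<and> (j, d {\<alpha>, \<beta>}) \<in> k))"
proof -
  obtain C ii where "square_ind_seq r k C ii"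
    using assms(6) unfolding square_ind_def by blast
  then interpret square_ind_sequence r k C ii
    using assms(1-3,5) by unfold_locales
  show ?thesis
  proof (intro exI[of _ pair_dist] conjI allI ballI impI)
    show "pair_dist {\<alpha>, \<beta>} \<in> Field k" if "\<alpha> \<in> Field r" "\<beta> \<in> Field r" "\<alpha> \<noteq> \<beta>" for \<alpha> \<beta>
      using pair_dist_in_Field that .
  next
    fix \<alpha> \<beta> \<gamma> assume "olt r \<alpha> \<beta>" "olt r \<beta> \<gamma>"
    then show "(pair_dist {\<alpha>, \<gamma>}, pair_dist {\<alpha>, \<beta>}) \<in> k \<or> (pair_dist {\<alpha>, \<gamma>}, pair_dist {\<beta>, \<gamma>}) \<in> k"
      and "(pair_dist {\<alpha>, \<beta>}, pair_dist {\<alpha>, \<gamma>}) \<in> k \<or> (pair_dist {\<alpha>, \<beta>}, pair_dist {\<beta>, \<gamma>}) \<in> k"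
      using ord_dist_ultra_outer ord_dist_ultra_lower pair_dist_eq r.olt_trans by metis+
  next
    fix I j assume "I \<subseteq> Field r" "\<forall>\<beta>\<in>Field r. \<exists>\<gamma>\<in>I. (\<beta>, \<gamma>) \<in> r" "j \<in> Field k"
    then show "\<exists>\<alpha>\<in>I. \<exists>\<beta>\<in>I. \<alpha> \<noteq> \<beta> \<and> (j, pair_dist {\<alpha>, \<beta>}) \<in> k"
      using ord_dist_unbounded pair_dist_eq unfolding olt_def by metis
  qed
qed

end
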